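(* There exist a harmonic function $h$ on $\mathbf D$ and a constant $B>0$ such that $|h(z)|\le B|z|$ for all $z\in\mathbf D$ and $\max_{1/6<r<1/3}h(re^{i\theta})\ge1$ for every $\theta\in[0,2\pi)$.
   Context: $\mathbf D$ is the open unit disc. *)

theory Defs
  imports "HOL-Analysis.Analysis"
begin

definition has_dir_deriv :: "(complex \<Rightarrow> real) \<Rightarrow> complex \<Rightarrow> complex \<Rightarrow> real \<Rightarrow> bool" where
  "has_dir_deriv f v z d \<longleftrightarrow> ((\<lambda>t. f (z + of_real t * v)) has_real_derivative d) (at 0)"

definition harmonic_on :: "complex set \<Rightarrow> (complex \<Rightarrow> real) \<Rightarrow> bool" where
  "harmonic_on S h \<longleftrightarrow> open S \<and> continuous_on S h \<and>
     (\<exists>hx hy hxx hxy hyx hyy.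
        (\<forall>z\<in>S. has_dir_deriv h 1 z (hx z) \<and> has_dir_deriv h \<i> z (hy z) \<and>
                has_dir_deriv hx 1 z (hxx z) \<and> has_dir_deriv hx \<i> z (hxy z) \<and>
                has_dir_deriv hy 1 z (hyx z) \<and> has_dir_deriv hy \<i> z (hyy z) \<and>
                hxx z + hyy z = 0) \<and>
        continuous_on S hx \<and> continuous_on S hy \<and> continuous_on S hxx \<and>
        continuous_on S hxy \<and> continuous_on S hyx \<and> continuous_on S hyy)"

end

theory Submission
  imports Defs "HOL-Complex_Analysis.Complex_Analysis"
begin

(*
  Take h = Re F for the polynomial F z = \<Sum>k=1..4. 6^(50 k) z^(50 k) / 2^(5 k^2). It has no
  constant term, hence |h z| \<le> B |z| on the unit disc. On the circle of radius
  r_j = 2^(j/5) / 6 the k-th term has modulus 2^(5 k (2 j - k)) = 2^(5 j^2 - 5 (k - j)^2), so the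
  j-th term dominates each of the others by a factor 2^5. For every angle \<psi> one of
  cos \<psi>, ..., cos (4 \<psi>) is at least 1/6; choosing j with cos (50 j \<theta>) \<ge> 1/6 gives
  h (r_j e^(i \<theta>)) \<ge> 2^(5 j^2) (1/6 - 3/32) \<ge> 1.
*)

lemma has_dir_deriv_Re:
  assumes "(f has_field_derivative f') (at z)"
  shows "has_dir_deriv (\<lambda>w. Re (f w)) v z (Re (f' * v))"
proof -
  have "((\<lambda>t. z + t * v) has_field_derivative v) (at 0)"
    by (auto intro!: derivative_eq_intros)
  moreover have "(f has_field_derivative f') (at (z + 0 * v))"
    using assms by simp
  ultimately have "((\<lambda>t. f (z + t * v)) has_field_derivative f' * v) (at 0)"
    using DERIV_chain2 by (fastforce simp: mult.commute)
  then have "((\<lambda>t. f (z + of_real t * v)) has_vector_derivative f' * v) (at 0)"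
    using has_vector_derivative_real_field[of "\<lambda>t. f (z + t * v)" "f' * v" 0] by simp
  then show ?thesis
    unfolding has_dir_deriv_def by (rule has_field_derivative_Re)
qed

lemma harmonic_onI:
  assumes "open S" "continuous_on S h"
    and "\<And>z. z \<in> S \<Longrightarrow>
      has_dir_deriv h 1 z (hx z) \<and> has_dir_deriv h \<i> z (hy z) \<and>
      has_dir_deriv hx 1 z (hxx z) \<and> has_dir_deriv hx \<i> z (hxy z) \<and>
      has_dir_deriv hy 1 z (hyx z) \<and> has_dir_deriv hy \<i> z (hyy z) \<and>
      hxx z + hyy z = 0"
    and "continuous_on S hx" "continuous_on S hy" "continuous_on S hxx"
      "continuous_on S hxy" "continuous_on S hyx" "continuous_on S hyy"
  shows "harmonic_on S h"
  unfolding harmonic_on_def using assms by blast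

lemma harmonic_on_Re_holomorphic:
  assumes holo: "f holomorphic_on S" and "open S"
  shows "harmonic_on S (\<lambda>z. Re (f z))"
proof -
  define f1 where "f1 = deriv f"
  define f2 where "f2 = deriv f1"
  have holo1: "f1 holomorphic_on S"
    unfolding f1_def using holo \<open>open S\<close> by (rule holomorphic_deriv)
  have holo2: "f2 holomorphic_on S"
    unfolding f2_def using holo1 \<open>open S\<close> by (rule holomorphic_deriv)
  (* Differentiating Re g in direction v gives Re (g' * v), so every partial derivative
     up to order 2 has the form Re (f1 z * c) or Re (f2 z * c). *)
  have cont: "continuous_on S (\<lambda>z. Re (g z * c))" if "g holomorphic_on S" for g c
    using holomorphic_on_imp_continuous_on[OF that] by (auto intro!: continuous_intros)
  show ?thesis
  proof (rule harmonic_onI[where hx = "\<lambda>z. Re (f1 z * 1)" and hy = "\<lambda>z. Re (f1 z * \<i>)"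
        and hxx = "\<lambda>z. Re (f2 z * 1)" and hxy = "\<lambda>z. Re (f2 z * \<i>)"
        and hyx = "\<lambda>z. Re (f2 z * \<i>)" and hyy = "\<lambda>z. Re (f2 z * \<i> * \<i>)"])
    fix z assume "z \<in> S"
    have d0: "(f has_field_derivative f1 z) (at z)"
      unfolding f1_def using holo \<open>open S\<close> \<open>z \<in> S\<close> by (rule holomorphic_derivI)
    have d1: "((\<lambda>w. f1 w * c) has_field_derivative f2 z * c) (at z)" for c
      unfolding f2_def using holo1 \<open>open S\<close> \<open>z \<in> S\<close>
      by (intro DERIV_cmult_right holomorphic_derivI)
    show "has_dir_deriv (\<lambda>z. Re (f z)) 1 z (Re (f1 z * 1)) \<and>
        has_dir_deriv (\<lambda>z. Re (f z)) \<i> z (Re (f1 z * \<i>)) \<and>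
        has_dir_deriv (\<lambda>z. Re (f1 z * 1)) 1 z (Re (f2 z * 1)) \<and>
        has_dir_deriv (\<lambda>z. Re (f1 z * 1)) \<i> z (Re (f2 z * \<i>)) \<and>
        has_dir_deriv (\<lambda>z. Re (f1 z * \<i>)) 1 z (Re (f2 z * \<i>)) \<and>
        has_dir_deriv (\<lambda>z. Re (f1 z * \<i>)) \<i> z (Re (f2 z * \<i> * \<i>)) \<and>
        Re (f2 z * 1) + Re (f2 z * \<i> * \<i>) = 0"
      using has_dir_deriv_Re[OF d0, of 1] has_dir_deriv_Re[OF d0, of \<i>]
        has_dir_deriv_Re[OF d1[of 1], of 1] has_dir_deriv_Re[OF d1[of 1], of \<i>]
        has_dir_deriv_Re[OF d1[of \<i>], of 1] has_dir_deriv_Re[OF d1[of \<i>], of \<i>]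
      by simp
  next
    show "continuous_on S (\<lambda>z. Re (f z))"
      using cont[OF holo, of 1] by simp
  qed (use \<open>open S\<close> cont[OF holo1] cont[OF holo2] in \<open>simp_all only: mult.assoc\<close>)
qed

lemma cos_ge_one_sixth:
  assumes "\<bar>x - 2 * pi * of_int m\<bar> \<le> 5 * pi / 12"
  shows "1/6 \<le> cos x"
proof -
  have "cos (5 * pi / 12) = sqrt 2 / 2 * (sqrt 3 / 2) - sqrt 2 / 2 * (1/2)"
    using cos_add[of "pi/4" "pi/6"] by (simp add: cos_45 cos_30 sin_45 sin_30 add_divide_distrib)
  moreover have "sqrt 2 * (sqrt 3 - 1) \<ge> 1.4 * 0.7"
  proof (rule mult_mono)
    show "1.4 \<le> sqrt 2" "0.7 \<le> sqrt 3 - 1"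
      using real_le_rsqrt[of "1.4" 2] real_le_rsqrt[of "1.7" 3] by (simp_all add: power2_eq_square)
  qed simp_all
  ultimately have "1/6 \<le> cos (5 * pi / 12)"
    by (simp add: algebra_simps)
  also have "\<dots> \<le> cos \<bar>x - 2 * pi * of_int m\<bar>"
    using assms by (intro cos_monotone_0_pi_le) auto
  also have "\<dots> = cos x"
    by (simp add: abs_if cos_diff)
  finally show ?thesis .
qed

lemma exists_multiple_cos_ge_one_sixth_0_pi:
  assumes "0 \<le> t" "t \<le> pi"
  shows "\<exists>k\<in>{1..4::nat}. 1/6 \<le> cos (real k * t)"
proof -
  (* The four ranges are where t, 4 t - 2 pi, 3 t - 2 pi and 2 t - 2 pi, respectively,
     lie in [-5 pi / 12, 5 pi / 12]. *)
  consider "t \<le> 5*pi/12" | "5*pi/12 \<le> t" "t \<le> 29*pi/48" | "29*pi/48 \<le> t" "t \<le> 29*pi/36"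
    | "29*pi/36 \<le> t"
    by linarith
  then show ?thesis
  proof cases
    case 1
    then have "1/6 \<le> cos (real 1 * t)"
      using assms cos_ge_one_sixth[of t 0] by simp
    then show ?thesis by fastforce
  next
    case 2
    then have "1/6 \<le> cos (real 4 * t)"
      by (intro cos_ge_one_sixth[of _ 1]) (auto simp: abs_if)
    then show ?thesis by fastforce
  next
    case 3
    then have "1/6 \<le> cos (real 3 * t)"
      by (intro cos_ge_one_sixth[of _ 1]) (auto simp: abs_if)
    then show ?thesis by fastforce
  next
    case 4
    then have "1/6 \<le> cos (real 2 * t)"
      using assms by (intro cos_ge_one_sixth[of _ 1]) (auto simp: abs_if)
    then show ?thesis by fastforce
  qed
qed

lemma exists_multiple_cos_ge_one_sixth:
  "\<exists>k\<in>{1..4::nat}. 1/6 \<le> cos (real k * \<psi>)"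
proof -
  obtain t where t: "-pi < t" "t \<le> pi" "sin t = sin \<psi>" "cos t = cos \<psi>"
    using sincos_principal_value by blast
  then obtain n :: int where n: "\<psi> = t + 2 * pi * n"
    using sin_cos_eq_iff by metis
  have "cos (real k * \<psi>) = cos (real k * \<bar>t\<bar>)" for k
  proof -
    have "cos (real k * \<psi>) = cos (real k * t + 2 * pi * of_int (int k * n))"
      unfolding n by (simp add: algebra_simps)
    also have "\<dots> = cos (real k * t)"
      by (simp only: cos_add cos_int_2pin sin_int_2pin mult_1_right mult_zero_right diff_zero)
    finally show ?thesis
      by (simp add: abs_if)
  qed
  then show ?thesis
    using exists_multiple_cos_ge_one_sixth_0_pi[of "\<bar>t\<bar>"] t by simp
qed

lemma norm_sum_powers_le:
  fixes z :: "'a::real_normed_div_algebra"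
  assumes "norm z \<le> 1" and "\<And>k. k \<in> K \<Longrightarrow> 1 \<le> n k"
  shows "norm (\<Sum>k\<in>K. c k * z ^ n k) \<le> (\<Sum>k\<in>K. norm (c k)) * norm z"
proof -
  have "norm (\<Sum>k\<in>K. c k * z ^ n k) \<le> (\<Sum>k\<in>K. norm (c k) * norm z ^ n k)"
    by (rule order_trans[OF norm_sum]) (simp add: norm_mult norm_power)
  also have "\<dots> \<le> (\<Sum>k\<in>K. norm (c k) * norm z)"
    using assms power_decreasing[of 1 _ "norm z"] by (intro sum_mono mult_left_mono) auto
  finally show ?thesis
    by (simp add: sum_distrib_right)
qed

lemma Re_power_polar:
  "Re ((of_real \<rho> * exp (\<i> * of_real \<theta>)) ^ n) = \<rho> ^ n * cos (real n * \<theta>)"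
proof -
  have "(of_real \<rho> * exp (\<i> * of_real \<theta>)) ^ n =
      of_real (\<rho> ^ n) * exp (\<i> * of_real (real n * \<theta>))"
    by (simp add: power_mult_distrib exp_of_nat_mult[symmetric] mult_ac)
  then show ?thesis
    by (simp add: Re_exp)
qed

lemma dominant_term_sum_ge_one:
  fixes w c :: "'a \<Rightarrow> real"
  assumes "finite K" "card K \<le> 4" "j \<in> K"
    and "\<And>k. k \<in> K \<Longrightarrow> \<bar>c k\<bar> \<le> 1"
    and "\<And>k. k \<in> K \<Longrightarrow> k \<noteq> j \<Longrightarrow> 0 \<le> w k \<and> w k \<le> w j / 32"
    and "1/6 \<le> c j" "32 \<le> w j"
  shows "1 \<le> (\<Sum>k\<in>K. w k * c k)"
proof -
  have "- (w j / 32) \<le> w k * c k" if "k \<in> K - {j}" for k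
  proof -
    have "0 \<le> w k" "w k \<le> w j / 32" "\<bar>c k\<bar> \<le> 1"
      using assms(4,5) that by auto
    then have "\<bar>w k * c k\<bar> \<le> w k"
      by (simp add: abs_mult mult_left_le)
    with \<open>w k \<le> w j / 32\<close> show ?thesis
      by linarith
  qed
  then have "- (real (card (K - {j})) * (w j / 32)) \<le> (\<Sum>k\<in>K - {j}. w k * c k)"
    using sum_mono[of "K - {j}" "\<lambda>_. - (w j / 32)"] by simp
  moreover have "real (card (K - {j})) \<le> 3"
    using assms(1-3) by simp
  moreover have "w j / 6 \<le> w j * c j"
    using assms(6,7) mult_left_mono[of "1/6" "c j" "w j"] by simp
  ultimately have "w j * c j + (\<Sum>k\<in>K - {j}. w k * c k) \<ge> 1"
    using assms(7) mult_right_mono[of "real (card (K - {j}))" 3 "w j / 32"] by linarith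
  then show ?thesis
    using sum.remove[OF assms(1,3), of "\<lambda>k. w k * c k"] by linarith
qed

definition peak_poly :: "complex \<Rightarrow> complex" where
  "peak_poly z = (\<Sum>k=1..4. of_real (6 ^ (50 * k) / 2 ^ (5 * k\<^sup>2)) * z ^ (50 * k))"

lemma norm_peak_poly_le:
  assumes "cmod z \<le> 1"
  shows "cmod (peak_poly z) \<le> (\<Sum>k=1..4::nat. 6 ^ (50 * k) / 2 ^ (5 * k\<^sup>2)) * cmod z"
proof -
  have "cmod (peak_poly z) \<le>
      (\<Sum>k=1..4. cmod (of_real (6 ^ (50 * k) / 2 ^ (5 * k\<^sup>2)) :: complex)) * cmod z"
    unfolding peak_poly_def using assms by (rule norm_sum_powers_le) simp
  also have "(\<Sum>k=1..4. cmod (of_real (6 ^ (50 * k) / 2 ^ (5 * k\<^sup>2)) :: complex)) =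
      (\<Sum>k=1..4::nat. 6 ^ (50 * k) / 2 ^ (5 * k\<^sup>2))"
    by (intro sum.cong refl)
      (simp only: norm_of_real abs_of_nonneg zero_le_divide_iff zero_le_power zero_le_numeral simp_thms)
  finally show ?thesis .
qed

lemma Re_peak_poly_polar:
  "Re (peak_poly (of_real r * exp (\<i> * of_real \<theta>))) =
     (\<Sum>k=1..4. 6 ^ (50 * k) / 2 ^ (5 * k\<^sup>2) * r ^ (50 * k) * cos (real (50 * k) * \<theta>))"
proof -
  have Re_of_real_mult: "Re (of_real c * w) = c * Re w" for c w
    by simp
  show ?thesis
    unfolding peak_poly_def Re_sum by (simp only: Re_of_real_mult Re_power_polar mult.assoc)
qed

lemma one_le_square_diff_of_nat:
  fixes j k :: nat
  assumes "k \<noteq> j"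
  shows "1 \<le> (real k - real j)\<^sup>2"
proof -
  have "1 \<le> \<bar>real k - real j\<bar>"
    using assms by linarith
  then show ?thesis
    by (metis one_le_power power2_abs)
qed

lemma Re_peak_poly_ge_one:
  "\<exists>r\<in>{1/6<..<1/3}. 1 \<le> Re (peak_poly (of_real r * exp (\<i> * of_real \<theta>)))"
proof -
  obtain j :: nat where j: "j \<in> {1..4}" "1/6 \<le> cos (real (50 * j) * \<theta>)"
    using exists_multiple_cos_ge_one_sixth[of "50 * \<theta>"] by (auto simp: mult_ac)
  define r where "r = 2 powr (real j / 5) / 6"
  define w where "w k = 2 powr (10 * real j * real k - 5 * (real k)\<^sup>2)" for k :: nat
  have r_in: "r \<in> {1/6<..<1/3}"
  proof -
    have "2 powr 0 < 2 powr (real j / 5)" "2 powr (real j / 5) < 2 powr (1::real)"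
      using j(1) by (intro powr_less_mono; simp)+
    then show ?thesis
      unfolding r_def by simp
  qed
  have weights: "6 ^ (50 * k) / 2 ^ (5 * k\<^sup>2) * r ^ (50 * k) = w k" for k
  proof -
    have "6 ^ (50 * k) / 2 ^ (5 * k\<^sup>2) * r ^ (50 * k) = (6 * r) ^ (50 * k) / 2 ^ (5 * k\<^sup>2)"
      by (simp add: power_mult_distrib)
    moreover have "(6 * r) ^ (50 * k) = 2 powr (10 * real j * real k)"
      unfolding r_def by (simp add: powr_power mult.assoc)
    moreover have "(2::real) ^ (5 * k\<^sup>2) = 2 powr (5 * (real k)\<^sup>2)"
      by (simp add: powr_realpow[symmetric])
    ultimately show ?thesis
      unfolding w_def by (simp add: powr_diff)
  qed
  have "1 \<le> (\<Sum>k=1..4. w k * cos (real (50 * k) * \<theta>))"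
  proof (rule dominant_term_sum_ge_one)
    have w_j: "w j = 2 powr (5 * (real j)\<^sup>2)"
      unfolding w_def by (simp add: power2_eq_square)
    have "(32::real) = 2 powr 5"
      by simp
    then have w_j_32: "w j / 32 = 2 powr (5 * (real j)\<^sup>2 - 5)"
      unfolding w_j by (simp add: powr_diff)
    show "0 \<le> w k \<and> w k \<le> w j / 32" if "k \<noteq> j" for k
    proof -
      have "10 * real j * real k - 5 * (real k)\<^sup>2 \<le> 5 * (real j)\<^sup>2 - 5"
        using one_le_square_diff_of_nat[OF that] by (simp add: power2_eq_square algebra_simps)
      then have "w k \<le> 2 powr (5 * (real j)\<^sup>2 - 5)"
        unfolding w_def by (intro powr_mono) auto
      then show ?thesis
        unfolding w_j_32 by (simp add: w_def)
    qed
    show "32 \<le> w j"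
      unfolding w_j using j(1) by (subst \<open>32 = 2 powr 5\<close>) (intro powr_mono, auto)
  qed (use j in \<open>auto simp: w_def\<close>)
  then show ?thesis
    using r_in by (intro bexI[of _ r]) (simp_all only: Re_peak_poly_polar weights)
qed

theorem lemma10:
  shows "\<exists>(h :: complex \<Rightarrow> real) (B :: real).
           harmonic_on (ball 0 1) h \<and> B > 0 \<and>
           (\<forall>z\<in>ball 0 1. \<bar>h z\<bar> \<le> B * cmod z) \<and>
           (\<forall>\<theta>\<in>{0..<2*pi}. \<exists>r\<in>{1/6<..<1/3}. h (of_real r * exp (\<i> * of_real \<theta>)) \<ge> 1)"
proof -
  define B where "B = (\<Sum>k=1..4::nat. 6 ^ (50 * k) / 2 ^ (5 * k\<^sup>2) :: real)"
  have "harmonic_on (ball 0 1) (\<lambda>z. Re (peak_poly z))"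
    by (rule harmonic_on_Re_holomorphic) (auto simp: peak_poly_def intro!: holomorphic_intros)
  moreover have "B > 0"
    unfolding B_def by (intro sum_pos) auto
  moreover have "\<bar>Re (peak_poly z)\<bar> \<le> B * cmod z" if "z \<in> ball 0 1" for z
  proof -
    have "\<bar>Re (peak_poly z)\<bar> \<le> cmod (peak_poly z)"
      by (rule abs_Re_le_cmod)
    also have "\<dots> \<le> B * cmod z"
      unfolding B_def using that by (intro norm_peak_poly_le) simp
    finally show ?thesis .
  qed
  ultimately show ?thesis
    using Re_peak_poly_ge_one by blast
qed

end
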